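(* Let $V\subseteq\mathcal V$ be finite and $\mathcal E,\mathcal F\in\mathit{DProg}(V)$. Then (1) $\{\mathcal E\}\le_T^s\{\mathcal F\}$ iff $\mathcal E\le_T^e\mathcal F$; (2) $\{\mathcal E\}\le_P^s\{\mathcal F\}$ iff $\mathcal E\le_P^e\mathcal F$.
   Context: $\mathcal V$ is a countably infinite set of qubit variables; $\mathcal H_V=\bigotimes_{q\in V}\mathcal H_q$ for finite $V$. $\mathcal D(\mathcal H)$: partial density operators; $\mathcal P(\mathcal H)$: effects (positive operators with eigenvalues in $[0,1]$). $\mathit{DProg}(V)$: completely positive trace-nonincreasing super-operators on $\mathcal L(\mathcal H_V)$. Operators/super-operators on subsystems are implicitly extended by tensoring with identities. Effect-based: for finite $W$ and $M,N\in\mathcal P(\mathcal H_W)$, $\mathcal E\models_{tot}(M,N)$ iff for all finite $X\supseteq V\cup W$ and $\rho\in\mathcal D(\mathcal H_X)$, ${\rm tr}(M\rho)\le{\rm tr}(N\mathcal E(\rho))$; $\mathcal E\models_{par}(M,N)$ iff moreover-with-slack ${\rm tr}(M\rho)\le{\rm tr}(N\mathcal E(\rho))+{\rm tr}(\rho)-{\rm tr}(\mathcal E(\rho))$ for all such $X,\rho$. $\mathcal E\le_T^e\mathcal F$ (resp. $\le_P^e$) iff every $(M,N)$ (over all finite $W$) satisfied by $\mathcal E$ in the total (resp. partial) sense is satisfied by $\mathcal F$. Set-of-effects based: for a set of super-operators $\mathbb E$ and $\Theta,\Psi\subseteq\mathcal P(\mathcal H_W)$, let $\mathrm{Exp}_{dem}(\rho\models\Theta)=\inf_{M\in\Theta}{\rm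 tr}(M\rho)$ (equal to ${\rm tr}(\rho)$ if $\Theta=\emptyset$). $\mathbb E\models_{tot}(\Theta,\Psi)$ iff for all finite $X\supseteq V\cup W$ and $\rho\in\mathcal D(\mathcal H_X)$, $\mathrm{Exp}_{dem}(\rho\models\Theta)\le\inf_{\mathcal E\in\mathbb E}\mathrm{Exp}_{dem}(\mathcal E(\rho)\models\Psi)$; $\mathbb E\models_{par}(\Theta,\Psi)$ iff for all such $X,\rho$, $\mathrm{Exp}_{dem}(\rho\models\Theta)\le\inf_{\mathcal E\in\mathbb E}[\mathrm{Exp}_{dem}(\mathcal E(\rho)\models\Psi)+{\rm tr}(\rho)-{\rm tr}(\mathcal E(\rho))]$. $\mathbb E\le_T^s\mathbb F$ (resp. $\le_P^s$) iff for every finite $W$ and all $\Theta,\Psi\subseteq\mathcal P(\mathcal H_W)$, $\mathbb E\models_{tot}(\Theta,\Psi)$ implies $\mathbb F\models_{tot}(\Theta,\Psi)$ (resp. with $\models_{par}$). *)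

theory Defs
  imports Complex_Main
begin

(* Qubit variables: the countably infinite set \<V> is modelled by nat.
   A computational-basis vector of H_X (X finite) is an assignment
   a :: nat \<Rightarrow> bool with a q = False for q \<notin> X.
   An operator on H_X is a function basis \<Rightarrow> basis \<Rightarrow> complex
   (matrix entries), only its values on B X \<times> B X matter. *)

type_synonym qvar = nat
type_synonym basis = "qvar \<Rightarrow> bool"
type_synonym op = "basis \<Rightarrow> basis \<Rightarrow> complex"
type_synonym superop = "op \<Rightarrow> op"

definition B :: "qvar set \<Rightarrow> basis set" where
  "B X = {a. \<forall>q. q \<notin> X \<longrightarrow> \<not> a q}"

definition restr :: "basis \<Rightarrow> qvar set \<Rightarrow> basis" where
  "restr a W = (\<lambda>q. if q \<in> W then a q else False)"

definition merge :: "basis \<Rightarrow> basis \<Rightarrow> qvar set \<Rightarrow> basis" where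
  "merge a' a V = (\<lambda>q. if q \<in> V then a' q else a q)"

definition idop :: op where
  "idop = (\<lambda>a b. if a = b then 1 else 0)"

definition trace :: "qvar set \<Rightarrow> op \<Rightarrow> complex" where
  "trace X M = (\<Sum>a\<in>B X. M a a)"

definition mult :: "qvar set \<Rightarrow> op \<Rightarrow> op \<Rightarrow> op" where
  "mult X M N = (\<lambda>a c. \<Sum>b\<in>B X. M a b * N b c)"

(* M on H_W, implicitly extended to M \<otimes> I on any larger space *)
definition ext :: "qvar set \<Rightarrow> op \<Rightarrow> op" where
  "ext W M = (\<lambda>a b. if (\<forall>q. q \<notin> W \<longrightarrow> a q = b q)
                      then M (restr a W) (restr b W) else 0)"

(* super-operator E on L(H_V), implicitly extended to E \<otimes> id on L(H_X), X \<supseteq> V: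
   block-wise application to the blocks \<rho>_{cd} indexed by basis vectors c,d of H_{X-V} *)
definition sapp :: "qvar set \<Rightarrow> superop \<Rightarrow> op \<Rightarrow> op" where
  "sapp V E \<rho> = (\<lambda>a b. E (\<lambda>a' b'. \<rho> (merge a' a V) (merge b' b V)) (restr a V) (restr b V))"

definition positive :: "qvar set \<Rightarrow> op \<Rightarrow> bool" where
  "positive X M \<longleftrightarrow> (\<forall>\<psi> :: basis \<Rightarrow> complex.
     (let z = (\<Sum>a\<in>B X. \<Sum>b\<in>B X. cnj (\<psi> a) * M a b * \<psi> b) in Im z = 0 \<and> 0 \<le> Re z))"

definition density :: "qvar set \<Rightarrow> op \<Rightarrow> bool" where
  "density X \<rho> \<longleftrightarrow> positive X \<rho> \<and> Re (trace X \<rho>) \<le> 1"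

definition effect :: "qvar set \<Rightarrow> op \<Rightarrow> bool" where
  "effect W M \<longleftrightarrow> positive W M \<and> positive W (\<lambda>a b. idop a b - M a b)"

definition superop_on :: "qvar set \<Rightarrow> superop \<Rightarrow> bool" where
  "superop_on V E \<longleftrightarrow>
     (\<forall>M N. (\<forall>a\<in>B V. \<forall>b\<in>B V. M a b = N a b) \<longrightarrow> (\<forall>a\<in>B V. \<forall>b\<in>B V. E M a b = E N a b)) \<and>
     (\<forall>M N. \<forall>a\<in>B V. \<forall>b\<in>B V. E (\<lambda>x y. M x y + N x y) a b = E M a b + E N a b) \<and>
     (\<forall>c M. \<forall>a\<in>B V. \<forall>b\<in>B V. E (\<lambda>x y. c * M x y) a b = c * E M a b)"

(* DProg(V): completely positive, trace-nonincreasing super-operators on L(H_V) *)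
definition DProg :: "qvar set \<Rightarrow> superop set" where
  "DProg V = {E. superop_on V E \<and>
     (\<forall>X \<rho>. finite X \<and> V \<subseteq> X \<and> positive X \<rho> \<longrightarrow> positive X (sapp V E \<rho>)) \<and>
     (\<forall>\<rho>. positive V \<rho> \<longrightarrow> Re (trace V (E \<rho>)) \<le> Re (trace V \<rho>))}"

(* tr(M \<rho>) for M on H_W, \<rho> on H_X (real for positive M, \<rho>) *)
definition expv :: "qvar set \<Rightarrow> qvar set \<Rightarrow> op \<Rightarrow> op \<Rightarrow> real" where
  "expv X W M \<rho> = Re (trace X (mult X (ext W M) \<rho>))"

definition trr :: "qvar set \<Rightarrow> op \<Rightarrow> real" where
  "trr X \<rho> = Re (trace X \<rho>)"

definition sat_tot_e :: "qvar set \<Rightarrow> superop \<Rightarrow> qvar set \<Rightarrow> op \<Rightarrow> op \<Rightarrow> bool" where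
  "sat_tot_e V E W M N \<longleftrightarrow> (\<forall>X \<rho>. finite X \<and> V \<union> W \<subseteq> X \<and> density X \<rho> \<longrightarrow>
      expv X W M \<rho> \<le> expv X W N (sapp V E \<rho>))"

definition sat_par_e :: "qvar set \<Rightarrow> superop \<Rightarrow> qvar set \<Rightarrow> op \<Rightarrow> op \<Rightarrow> bool" where
  "sat_par_e V E W M N \<longleftrightarrow> (\<forall>X \<rho>. finite X \<and> V \<union> W \<subseteq> X \<and> density X \<rho> \<longrightarrow>
      expv X W M \<rho> \<le> expv X W N (sapp V E \<rho>) + trr X \<rho> - trr X (sapp V E \<rho>))"

definition le_T_e :: "qvar set \<Rightarrow> superop \<Rightarrow> superop \<Rightarrow> bool" where
  "le_T_e V E F \<longleftrightarrow> (\<forall>W M N. finite W \<and> effect W M \<and> effect W N \<longrightarrow>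
      sat_tot_e V E W M N \<longrightarrow> sat_tot_e V F W M N)"

definition le_P_e :: "qvar set \<Rightarrow> superop \<Rightarrow> superop \<Rightarrow> bool" where
  "le_P_e V E F \<longleftrightarrow> (\<forall>W M N. finite W \<and> effect W M \<and> effect W N \<longrightarrow>
      sat_par_e V E W M N \<longrightarrow> sat_par_e V F W M N)"

definition Exp_dem :: "qvar set \<Rightarrow> qvar set \<Rightarrow> op \<Rightarrow> op set \<Rightarrow> real" where
  "Exp_dem X W \<rho> \<Theta> = (if \<Theta> = {} then trr X \<rho> else (INF M\<in>\<Theta>. expv X W M \<rho>))"

definition sat_tot_s :: "qvar set \<Rightarrow> superop set \<Rightarrow> qvar set \<Rightarrow> op set \<Rightarrow> op set \<Rightarrow> bool" where
  "sat_tot_s V EE W \<Theta> \<Psi> \<longleftrightarrow> (\<forall>X \<rho>. finite X \<and> V \<union> W \<subseteq> X \<and> density X \<rho> \<longrightarrow>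
      Exp_dem X W \<rho> \<Theta> \<le> (INF E\<in>EE. Exp_dem X W (sapp V E \<rho>) \<Psi>))"

definition sat_par_s :: "qvar set \<Rightarrow> superop set \<Rightarrow> qvar set \<Rightarrow> op set \<Rightarrow> op set \<Rightarrow> bool" where
  "sat_par_s V EE W \<Theta> \<Psi> \<longleftrightarrow> (\<forall>X \<rho>. finite X \<and> V \<union> W \<subseteq> X \<and> density X \<rho> \<longrightarrow>
      Exp_dem X W \<rho> \<Theta> \<le> (INF E\<in>EE. Exp_dem X W (sapp V E \<rho>) \<Psi> + trr X \<rho> - trr X (sapp V E \<rho>)))"

definition le_T_s :: "qvar set \<Rightarrow> superop set \<Rightarrow> superop set \<Rightarrow> bool" where
  "le_T_s V EE FF \<longleftrightarrow> (\<forall>W \<Theta> \<Psi>. finite W \<and> \<Theta> \<subseteq> Collect (effect W) \<and> \<Psi> \<subseteq> Collect (effect W) \<longrightarrow>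
      sat_tot_s V EE W \<Theta> \<Psi> \<longrightarrow> sat_tot_s V FF W \<Theta> \<Psi>)"

definition le_P_s :: "qvar set \<Rightarrow> superop set \<Rightarrow> superop set \<Rightarrow> bool" where
  "le_P_s V EE FF \<longleftrightarrow> (\<forall>W \<Theta> \<Psi>. finite W \<and> \<Theta> \<subseteq> Collect (effect W) \<and> \<Psi> \<subseteq> Collect (effect W) \<longrightarrow>
      sat_par_s V EE W \<Theta> \<Psi> \<longrightarrow> sat_par_s V FF W \<Theta> \<Psi>)"

end

theory Submission imports Defs begin

(* The dual (Heisenberg-picture) super-operator E\<dagger> maps effects to effects and satisfies
   tr(E\<dagger>(N) \<rho>) = tr(N E(\<rho>)) on every extended state. Hence E satisfies (E\<dagger>(N), N) in the
   total sense and (I - E\<dagger>(I - N), N) in the partial sense, both with equality, so E \<le>e F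
   forces tr(N E(\<rho>)) \<le> tr(N F(\<rho>)) for every single effect N (in the partial case up to the
   trace slack). Taking infima over \<Psi> yields the set-based order; the converse is the
   singleton instance. Only E needs to be a program. That E\<dagger>(N) is positive rests on
   tr(K \<sigma>) \<ge> 0 for positive K and \<sigma>, proved by induction on the index set. *)

section \<open>Basis assignments\<close>

lemma finite_B: "finite X \<Longrightarrow> finite (B X)"
proof -
  assume "finite X"
  have "B X \<subseteq> (\<lambda>S q. q \<in> S) ` Pow X"
  proof
    fix a assume "a \<in> B X"
    hence "a = (\<lambda>q. q \<in> {q. a q})" and "{q. a q} \<subseteq> X" by (auto simp: B_def)
    thus "a \<in> (\<lambda>S q. q \<in> S) ` Pow X" by blast
  qed
  thus ?thesis using \<open>finite X\<close> by (meson finite_Pow_iff finite_imageI finite_subset)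
qed

lemma restr_in_B [simp]: "restr a W \<in> B W"
  by (simp add: B_def restr_def)

lemma merge_in_B: "W \<subseteq> X \<Longrightarrow> a' \<in> B W \<Longrightarrow> c \<in> B (X - W) \<Longrightarrow> merge a' c W \<in> B X"
  by (auto simp: B_def merge_def)

lemma restr_merge_left: "a' \<in> B W \<Longrightarrow> restr (merge a' c W) W = a'"
  by (auto simp: B_def merge_def restr_def fun_eq_iff)

lemma restr_merge_right: "c \<in> B (X - W) \<Longrightarrow> restr (merge a' c W) (X - W) = c"
  by (auto simp: B_def merge_def restr_def fun_eq_iff)

lemma restr_merge_subset: "V \<subseteq> W \<Longrightarrow> restr (merge u c W) V = restr u V"
  by (auto simp: restr_def merge_def fun_eq_iff)

lemma merge_restr: "a \<in> B X \<Longrightarrow> W \<subseteq> X \<Longrightarrow> merge (restr a W) (restr a (X - W)) W = a"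
  by (auto simp: B_def merge_def restr_def fun_eq_iff)

lemma merge_merge_right: "merge x (merge a' c V) V = merge x c V"
  by (auto simp: merge_def fun_eq_iff)

lemma merge_merge_subset: "V \<subseteq> W \<Longrightarrow> merge a' (merge u c W) V = merge (merge a' u V) c W"
  by (auto simp: merge_def fun_eq_iff)

lemma sum_B_split:
  assumes "W \<subseteq> X"
  shows "(\<Sum>a\<in>B X. f a) = (\<Sum>c\<in>B (X - W). \<Sum>a'\<in>B W. f (merge a' c W))"
proof -
  have "(\<Sum>c\<in>B (X - W). \<Sum>a'\<in>B W. f (merge a' c W)) = (\<Sum>(c,a')\<in>B (X - W) \<times> B W. f (merge a' c W))"
    by (rule sum.cartesian_product)
  also have "\<dots> = (\<Sum>a\<in>B X. f a)"
    by (rule sum.reindex_bij_witness[where i="\<lambda>a. (restr a (X - W), restr a W)" and j="\<lambda>(c,a'). merge a' c W"])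
       (use assms in \<open>auto simp: restr_merge_left restr_merge_right merge_restr merge_in_B\<close>)
  finally show ?thesis by simp
qed

lemma sum_B_fiber:
  assumes "W \<subseteq> X" "finite X" "c \<in> B (X - W)"
    and "\<And>a. a \<in> B X \<Longrightarrow> restr a (X - W) \<noteq> c \<Longrightarrow> f a = 0"
  shows "(\<Sum>a\<in>B X. f a) = (\<Sum>a'\<in>B W. f (merge a' c W))"
proof -
  have "(\<Sum>a\<in>B X. f a) = (\<Sum>d\<in>B (X - W). \<Sum>a'\<in>B W. f (merge a' d W))"
    by (rule sum_B_split[OF assms(1)])
  also have "\<dots> = (\<Sum>d\<in>B (X - W). if d = c then (\<Sum>a'\<in>B W. f (merge a' c W)) else 0)"
  proof (rule sum.cong[OF refl])
    fix d assume d: "d \<in> B (X - W)"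
    have "f (merge a' d W) = 0" if "d \<noteq> c" "a' \<in> B W" for a'
      using assms(4)[of "merge a' d W"] assms(1) that d by (simp add: restr_merge_right merge_in_B)
    thus "(\<Sum>a'\<in>B W. f (merge a' d W)) = (if d = c then (\<Sum>a'\<in>B W. f (merge a' c W)) else 0)"
      by simp
  qed
  also have "\<dots> = (\<Sum>a'\<in>B W. f (merge a' c W))"
    using assms(2,3) by (simp add: finite_B)
  finally show ?thesis .
qed

section \<open>Positive semidefinite matrices\<close>

definition quad_form :: "'i set \<Rightarrow> ('i \<Rightarrow> 'i \<Rightarrow> complex) \<Rightarrow> ('i \<Rightarrow> complex) \<Rightarrow> complex" where
  "quad_form S M \<psi> = (\<Sum>a\<in>S. \<Sum>b\<in>S. cnj (\<psi> a) * M a b * \<psi> b)"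

definition psd_on :: "'i set \<Rightarrow> ('i \<Rightarrow> 'i \<Rightarrow> complex) \<Rightarrow> bool" where
  "psd_on S M \<longleftrightarrow> (\<forall>\<psi>. Im (quad_form S M \<psi>) = 0 \<and> 0 \<le> Re (quad_form S M \<psi>))"

definition trace_prod :: "'i set \<Rightarrow> ('i \<Rightarrow> 'i \<Rightarrow> complex) \<Rightarrow> ('i \<Rightarrow> 'i \<Rightarrow> complex) \<Rightarrow> complex" where
  "trace_prod S K \<sigma> = (\<Sum>a\<in>S. \<Sum>b\<in>S. K a b * \<sigma> b a)"

definition outer :: "('i \<Rightarrow> complex) \<Rightarrow> ('i \<Rightarrow> 'i \<Rightarrow> complex)" where
  "outer \<psi> = (\<lambda>u v. \<psi> u * cnj (\<psi> v))"

lemma psd_onD: "psd_on S M \<Longrightarrow> Im (quad_form S M \<psi>) = 0 \<and> 0 \<le> Re (quad_form S M \<psi>)"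
  unfolding psd_on_def by blast

lemma psd_on_outer: "psd_on S (outer \<psi>)"
  unfolding psd_on_def
proof
  fix \<phi>
  define z where "z = (\<Sum>a\<in>S. cnj (\<phi> a) * \<psi> a)"
  have "quad_form S (outer \<psi>) \<phi> = z * cnj z"
    unfolding quad_form_def outer_def z_def cnj_sum sum_product by (simp add: ac_simps)
  thus "Im (quad_form S (outer \<psi>) \<phi>) = 0 \<and> 0 \<le> Re (quad_form S (outer \<psi>) \<phi>)"
    by (simp add: complex_mult_cnj)
qed

lemma quad_form_eq_trace_prod_outer: "quad_form S K \<psi> = trace_prod S K (outer \<psi>)"
  unfolding quad_form_def trace_prod_def outer_def by (simp add: ac_simps)

lemma quad_form_supp:
  assumes "finite S" "T \<subseteq> S" "\<And>a. a \<in> S - T \<Longrightarrow> \<psi> a = 0"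
  shows "quad_form S M \<psi> = quad_form T M \<psi>"
proof -
  have "quad_form S M \<psi> = (\<Sum>a\<in>T. \<Sum>b\<in>S. cnj (\<psi> a) * M a b * \<psi> b)"
    unfolding quad_form_def by (rule sum.mono_neutral_right) (use assms in auto)
  also have "\<dots> = quad_form T M \<psi>"
    unfolding quad_form_def
    by (rule sum.cong[OF refl], rule sum.mono_neutral_right) (use assms in auto)
  finally show ?thesis .
qed

lemma psd_on_subset:
  assumes "finite S" "T \<subseteq> S" "psd_on S M"
  shows "psd_on T M"
  unfolding psd_on_def
proof
  fix \<psi>
  define \<phi> :: "_ \<Rightarrow> complex" where "\<phi> a = (if a \<in> T then \<psi> a else 0)" for a
  have "quad_form S M \<phi> = quad_form T M \<phi>"
    by (rule quad_form_supp) (use assms in \<open>auto simp: \<phi>_def\<close>)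
  also have "\<dots> = quad_form T M \<psi>"
    unfolding quad_form_def by (auto simp: \<phi>_def intro!: sum.cong)
  finally show "Im (quad_form T M \<psi>) = 0 \<and> 0 \<le> Re (quad_form T M \<psi>)"
    using psd_onD[OF assms(3), of \<phi>] by simp
qed

lemma quad_form_pair:
  assumes "finite S" "x \<in> S" "y \<in> S" "x \<noteq> y"
  shows "quad_form S M (\<lambda>a. if a = x then s else if a = y then t else 0) =
    cnj s * M x x * s + cnj s * M x y * t + cnj t * M y x * s + cnj t * M y y * t"
proof -
  define \<phi> where "\<phi> a = (if a = x then s else if a = y then t else 0)" for a
  have "quad_form S M \<phi> = quad_form {x, y} M \<phi>"
    by (rule quad_form_supp) (use assms in \<open>auto simp: \<phi>_def\<close>)
  also have "\<dots> = cnj s * M x x * s + cnj s * M x y * t + cnj t * M y x * s + cnj t * M y y * t"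
    using assms(4) by (simp add: quad_form_def \<phi>_def)
  finally show ?thesis unfolding \<phi>_def .
qed

lemma psd_on_diag:
  assumes "finite S" "psd_on S M" "x \<in> S"
  shows "Im (M x x) = 0 \<and> 0 \<le> Re (M x x)"
proof -
  define \<phi> :: "_ \<Rightarrow> complex" where "\<phi> a = (if a = x then 1 else 0)" for a
  have "quad_form S M \<phi> = quad_form {x} M \<phi>"
    by (rule quad_form_supp) (use assms in \<open>auto simp: \<phi>_def\<close>)
  also have "\<dots> = M x x" by (simp add: quad_form_def \<phi>_def)
  finally show ?thesis using psd_onD[OF assms(2), of \<phi>] by simp
qed

lemma psd_on_hermitian:
  assumes "finite S" "psd_on S M" "x \<in> S" "y \<in> S"
  shows "M x y = cnj (M y x)"
proof (cases "x = y")
  case True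
  thus ?thesis using psd_on_diag[OF assms(1-3)] by (simp add: complex_eq_iff)
next
  case False
  from psd_onD[OF assms(2), of "\<lambda>a. if a = x then 1 else if a = y then 1 else 0"]
  have "Im (M x x + M x y + M y x + M y y) = 0"
    unfolding quad_form_pair[OF assms(1,3,4) False] by simp
  moreover from psd_onD[OF assms(2), of "\<lambda>a. if a = x then 1 else if a = y then \<i> else 0"]
  have "Im (M x x + \<i> * M x y - \<i> * M y x + M y y) = 0"
    unfolding quad_form_pair[OF assms(1,3,4) False] by (simp add: algebra_simps)
  moreover have "Im (M x x) = 0" "Im (M y y) = 0"
    using psd_on_diag[OF assms(1,2,3)] psd_on_diag[OF assms(1,2,4)] by simp_all
  ultimately show ?thesis by (simp add: complex_eq_iff)
qed

text \<open>Testing the form on \<open>s e\<^sub>a + e\<^sub>y\<close> with \<open>s = - t M\<^sub>a\<^sub>y\<close> gives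
  \<open>M\<^sub>y\<^sub>y - 2 t \<bar>M\<^sub>a\<^sub>y\<bar>\<^sup>2 \<ge> 0\<close> for all \<open>t > 0\<close>.\<close>
lemma psd_on_zero_diag_row:
  assumes "finite S" "psd_on S M" "a \<in> S" "y \<in> S" "M a a = 0"
  shows "M a y = 0"
proof (rule ccontr)
  assume nz: "M a y \<noteq> 0"
  then have "a \<noteq> y" using assms(5) by auto
  define n where "n = (Re (M a y))\<^sup>2 + (Im (M a y))\<^sup>2"
  have n: "n > 0" using nz by (simp add: n_def complex_eq_iff sum_power2_gt_zero_iff)
  define t where "t = (Re (M y y) + 1) / (2 * n)"
  define s where "s = - complex_of_real t * M a y"
  have "M y a = cnj (M a y)" using psd_on_hermitian[OF assms(1,2,4,3)] .
  moreover have "cnj s * M a y = - t * n" "cnj (M a y) * s = - t * n"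
    using complex_mult_cnj[of "M a y"] by (simp_all add: s_def n_def mult.commute)
  ultimately have "quad_form S M (\<lambda>x. if x = a then s else if x = y then 1 else 0) = M y y - 2 * t * n"
    using assms(5) unfolding quad_form_pair[OF assms(1,3,4) \<open>a \<noteq> y\<close>] by simp
  moreover have "Re (M y y - 2 * t * n) = -1"
    using n by (simp add: t_def field_simps)
  ultimately show False
    using psd_onD[OF assms(2), of "\<lambda>x. if x = a then s else if x = y then 1 else 0"] by simp
qed

lemma trace_prod_insert_zero:
  assumes "finite S" "a \<notin> S" "\<And>x. x \<in> insert a S \<Longrightarrow> \<sigma> a x = 0 \<and> \<sigma> x a = 0"
  shows "trace_prod (insert a S) K \<sigma> = trace_prod S K \<sigma>"
  using assms by (simp add: trace_prod_def)

lemma psd_on_schur_complement: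
  assumes fin: "finite S" and aS: "a \<notin> S" and \<sigma>: "psd_on (insert a S) \<sigma>"
    and r: "\<sigma> a a = complex_of_real r" "r > 0"
  shows "psd_on S (\<lambda>x y. \<sigma> x y - \<sigma> x a * \<sigma> a y / complex_of_real r)"
  unfolding psd_on_def
proof
  fix \<psi>
  define t where "t = (\<Sum>y\<in>S. \<sigma> a y * \<psi> y)"
  define \<phi> where "\<phi> = \<psi>(a := - t / complex_of_real r)"
  have \<phi>S: "\<And>y. y \<in> S \<Longrightarrow> \<phi> y = \<psi> y" using aS by (auto simp: \<phi>_def)
  have cnj_t: "(\<Sum>x\<in>S. cnj (\<psi> x) * \<sigma> x a) = cnj t"
    unfolding t_def cnj_sum
    by (rule sum.cong[OF refl]) (simp add: psd_on_hermitian[OF _ \<sigma>, of _ a] fin)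
  let ?Q = "\<Sum>x\<in>S. \<Sum>y\<in>S. cnj (\<psi> x) * \<sigma> x y * \<psi> y"
  have "quad_form (insert a S) \<sigma> \<phi> =
      cnj (\<phi> a) * \<sigma> a a * \<phi> a + cnj (\<phi> a) * t + cnj t * \<phi> a + ?Q"
  proof -
    have "(\<Sum>y\<in>S. cnj (\<phi> a) * \<sigma> a y * \<phi> y) = cnj (\<phi> a) * t"
      unfolding t_def sum_distrib_left by (rule sum.cong[OF refl]) (simp add: \<phi>S mult.assoc)
    moreover have "(\<Sum>x\<in>S. cnj (\<phi> x) * \<sigma> x a * \<phi> a) = cnj t * \<phi> a"
      unfolding cnj_t[symmetric] sum_distrib_right by (rule sum.cong[OF refl]) (simp add: \<phi>S)
    moreover have "(\<Sum>x\<in>S. \<Sum>y\<in>S. cnj (\<phi> x) * \<sigma> x y * \<phi> y) = ?Q"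
      by (intro sum.cong refl) (simp add: \<phi>S)
    ultimately show ?thesis
      unfolding quad_form_def using fin aS by (simp add: sum.distrib)
  qed
  also have "\<dots> = ?Q - cnj t * t / complex_of_real r"
    using r by (simp add: \<phi>_def field_simps)
  also have "\<dots> = quad_form S (\<lambda>x y. \<sigma> x y - \<sigma> x a * \<sigma> a y / complex_of_real r) \<psi>"
  proof -
    have "quad_form S (\<lambda>x y. \<sigma> x y - \<sigma> x a * \<sigma> a y / complex_of_real r) \<psi> =
        ?Q - (\<Sum>x\<in>S. \<Sum>y\<in>S. (cnj (\<psi> x) * \<sigma> x a) * (\<sigma> a y * \<psi> y) / complex_of_real r)"
      unfolding quad_form_def by (simp add: sum_subtractf[symmetric] algebra_simps)
    also have "\<dots> = ?Q - (\<Sum>x\<in>S. cnj (\<psi> x) * \<sigma> x a) * (\<Sum>y\<in>S. \<sigma> a y * \<psi> y) / complex_of_real r"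
      by (simp add: sum_product sum_divide_distrib)
    finally show ?thesis unfolding cnj_t t_def by simp
  qed
  finally show "Im (quad_form S (\<lambda>x y. \<sigma> x y - \<sigma> x a * \<sigma> a y / complex_of_real r) \<psi>) = 0 \<and>
      0 \<le> Re (quad_form S (\<lambda>x y. \<sigma> x y - \<sigma> x a * \<sigma> a y / complex_of_real r) \<psi>)"
    using psd_onD[OF \<sigma>, of \<phi>] by simp
qed

lemma trace_prod_schur_split:
  assumes "finite S" "psd_on S \<sigma>" "a \<in> S" "r \<noteq> 0"
  shows "trace_prod S K \<sigma> = quad_form S K (\<lambda>y. \<sigma> y a) / complex_of_real r +
    trace_prod S K (\<lambda>x y. \<sigma> x y - \<sigma> x a * \<sigma> a y / complex_of_real r)"
proof -
  have "trace_prod S K \<sigma> =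
      (\<Sum>x\<in>S. \<Sum>y\<in>S. cnj (\<sigma> x a) * K x y * \<sigma> y a / complex_of_real r +
        K x y * (\<sigma> y x - \<sigma> y a * \<sigma> a x / complex_of_real r))"
    unfolding trace_prod_def
  proof (intro sum.cong refl)
    fix x y assume "x \<in> S"
    then have "cnj (\<sigma> x a) = \<sigma> a x" using psd_on_hermitian[OF assms(1,2,3)] by simp
    then show "K x y * \<sigma> y x = cnj (\<sigma> x a) * K x y * \<sigma> y a / complex_of_real r +
        K x y * (\<sigma> y x - \<sigma> y a * \<sigma> a x / complex_of_real r)"
      using assms(4) by (simp add: field_simps)
  qed
  then show ?thesis
    unfolding quad_form_def trace_prod_def by (simp add: sum.distrib sum_divide_distrib)
qed

text \<open>If \<open>\<sigma>\<^sub>a\<^sub>a = 0\<close>, row and column \<open>a\<close> of \<open>\<sigma>\<close> vanish;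
  otherwise \<open>\<sigma>\<close> is \<open>u u\<^sup>*/\<sigma>\<^sub>a\<^sub>a\<close> (\<open>u\<close> its \<open>a\<close>-th column) plus its Schur complement,
  which is positive and supported on the remaining indices.\<close>
lemma trace_prod_psd_nonneg:
  assumes "finite S" "psd_on S K" "psd_on S \<sigma>"
  shows "Im (trace_prod S K \<sigma>) = 0 \<and> 0 \<le> Re (trace_prod S K \<sigma>)"
  using assms
proof (induction S arbitrary: \<sigma> rule: finite_induct)
  case empty
  then show ?case by (simp add: trace_prod_def)
next
  case (insert a S)
  have fin: "finite (insert a S)" using insert.hyps by simp
  have K: "psd_on S K" by (rule psd_on_subset[OF fin _ insert.prems(1)]) auto
  have diag: "Im (\<sigma> a a) = 0 \<and> 0 \<le> Re (\<sigma> a a)" by (rule psd_on_diag[OF fin insert.prems(2)]) simp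
  show ?case
  proof (cases "Re (\<sigma> a a) = 0")
    case True
    then have "\<sigma> a a = 0" using diag by (simp add: complex_eq_iff)
    then have "\<sigma> a x = 0 \<and> \<sigma> x a = 0" if "x \<in> insert a S" for x
      using psd_on_zero_diag_row[OF fin insert.prems(2) _ that] psd_on_hermitian[OF fin insert.prems(2) that]
      by simp
    then have "trace_prod (insert a S) K \<sigma> = trace_prod S K \<sigma>"
      by (rule trace_prod_insert_zero[OF insert.hyps])
    moreover have "psd_on S \<sigma>" by (rule psd_on_subset[OF fin _ insert.prems(2)]) auto
    ultimately show ?thesis using insert.IH[OF K] by simp
  next
    case False
    define r where "r = Re (\<sigma> a a)"
    have r: "\<sigma> a a = complex_of_real r" "r > 0"
      using diag False by (simp_all add: r_def complex_eq_iff)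
    define \<sigma>' where "\<sigma>' x y = \<sigma> x y - \<sigma> x a * \<sigma> a y / complex_of_real r" for x y
    have "trace_prod (insert a S) K \<sigma>' = trace_prod S K \<sigma>'"
      by (rule trace_prod_insert_zero[OF insert.hyps]) (use r in \<open>simp add: \<sigma>'_def\<close>)
    moreover have "psd_on S \<sigma>'"
      unfolding \<sigma>'_def by (rule psd_on_schur_complement[OF insert.hyps insert.prems(2) r])
    moreover have "Im (quad_form (insert a S) K (\<lambda>y. \<sigma> y a)) = 0 \<and> 0 \<le> Re (quad_form (insert a S) K (\<lambda>y. \<sigma> y a))"
      by (rule psd_onD[OF insert.prems(1)])
    ultimately show ?thesis
      using trace_prod_schur_split[OF fin insert.prems(2) insertI1, of r K] insert.IH[OF K] r
      unfolding \<sigma>'_def[symmetric] by (simp add: Re_divide_of_real Im_divide_of_real)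
  qed
qed

section \<open>Cylindrical extension and partial trace\<close>

definition ptrace :: "qvar set \<Rightarrow> qvar set \<Rightarrow> op \<Rightarrow> op" where
  "ptrace X W \<rho> = (\<lambda>u v. \<Sum>c\<in>B (X - W). \<rho> (merge u c W) (merge v c W))"

lemma positive_iff_psd_on: "positive X M \<longleftrightarrow> psd_on (B X) M"
  by (simp add: positive_def psd_on_def quad_form_def)

lemma effect_iff_psd_on: "effect W M \<longleftrightarrow> psd_on (B W) M \<and> psd_on (B W) (\<lambda>a b. idop a b - M a b)"
  by (simp add: effect_def positive_iff_psd_on)

lemma ext_merge:
  assumes "a \<in> B X" "W \<subseteq> X" "b' \<in> B W"
  shows "ext W K a (merge b' (restr a (X - W)) W) = K (restr a W) b'"
proof -
  have "\<forall>q. q \<notin> W \<longrightarrow> a q = merge b' (restr a (X - W)) W q"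
    using assms by (auto simp: merge_def restr_def B_def)
  thus ?thesis using assms by (simp add: ext_def restr_merge_left)
qed

lemma ext_eq_zero:
  assumes "restr b (X - W) \<noteq> restr a (X - W)"
  shows "ext W K a b = 0"
proof -
  have "\<not> (\<forall>q. q \<notin> W \<longrightarrow> a q = b q)"
    using assms unfolding restr_def fun_eq_iff by (auto split: if_splits)
  thus ?thesis unfolding ext_def by (rule if_not_P)
qed

lemma sum_ext_mult:
  assumes "W \<subseteq> X" "finite X"
  shows "(\<Sum>a\<in>B X. \<Sum>b\<in>B X. ext W K a b * h a b) =
    (\<Sum>c\<in>B (X - W). \<Sum>a'\<in>B W. \<Sum>b'\<in>B W. K a' b' * h (merge a' c W) (merge b' c W))"
proof -
  have "(\<Sum>b\<in>B X. ext W K a b * h a b) =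
      (\<Sum>b'\<in>B W. K (restr a W) b' * h a (merge b' (restr a (X - W)) W))" if a: "a \<in> B X" for a
  proof -
    have "(\<Sum>b\<in>B X. ext W K a b * h a b) =
        (\<Sum>b'\<in>B W. ext W K a (merge b' (restr a (X - W)) W) * h a (merge b' (restr a (X - W)) W))"
      by (rule sum_B_fiber) (use assms ext_eq_zero in auto)
    thus ?thesis using a assms by (simp add: ext_merge)
  qed
  then have "(\<Sum>a\<in>B X. \<Sum>b\<in>B X. ext W K a b * h a b) =
      (\<Sum>a\<in>B X. \<Sum>b'\<in>B W. K (restr a W) b' * h a (merge b' (restr a (X - W)) W))"
    by (rule sum.cong[OF refl])
  also have "\<dots> = (\<Sum>c\<in>B (X - W). \<Sum>a'\<in>B W. \<Sum>b'\<in>B W. K a' b' * h (merge a' c W) (merge b' c W))"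
    by (subst sum_B_split[OF assms(1)]) (auto intro!: sum.cong simp: restr_merge_left restr_merge_right)
  finally show ?thesis .
qed

lemma trace_prod_ext:
  assumes "W \<subseteq> X" "finite X"
  shows "trace_prod (B X) (ext W K) \<rho> = trace_prod (B W) K (ptrace X W \<rho>)"
proof -
  have "trace_prod (B X) (ext W K) \<rho> =
      (\<Sum>c\<in>B (X - W). \<Sum>a'\<in>B W. \<Sum>b'\<in>B W. K a' b' * \<rho> (merge b' c W) (merge a' c W))"
    unfolding trace_prod_def by (rule sum_ext_mult[OF assms])
  also have "\<dots> = (\<Sum>a'\<in>B W. \<Sum>b'\<in>B W. \<Sum>c\<in>B (X - W). K a' b' * \<rho> (merge b' c W) (merge a' c W))"
    by (simp add: sum.swap[of _ "B (X - W)"])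
  also have "\<dots> = trace_prod (B W) K (ptrace X W \<rho>)"
    by (simp add: trace_prod_def ptrace_def sum_distrib_left)
  finally show ?thesis .
qed

lemma psd_on_ext:
  assumes "W \<subseteq> X" "finite X" "psd_on (B W) K"
  shows "psd_on (B X) (ext W K)"
  unfolding psd_on_def
proof
  fix \<psi>
  have "quad_form (B X) (ext W K) \<psi> = (\<Sum>a\<in>B X. \<Sum>b\<in>B X. ext W K a b * (cnj (\<psi> a) * \<psi> b))"
    unfolding quad_form_def by (simp add: ac_simps)
  also have "\<dots> = (\<Sum>c\<in>B (X - W). \<Sum>a'\<in>B W. \<Sum>b'\<in>B W.
      K a' b' * (cnj (\<psi> (merge a' c W)) * \<psi> (merge b' c W)))"
    by (rule sum_ext_mult[OF assms(1,2)])
  also have "\<dots> = (\<Sum>c\<in>B (X - W). quad_form (B W) K (\<lambda>a'. \<psi> (merge a' c W)))"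
    unfolding quad_form_def by (simp add: ac_simps)
  finally show "Im (quad_form (B X) (ext W K) \<psi>) = 0 \<and> 0 \<le> Re (quad_form (B X) (ext W K) \<psi>)"
    using psd_onD[OF assms(3)] by (simp add: Im_sum Re_sum sum_nonneg)
qed

lemma psd_on_block:
  assumes "V \<subseteq> Y" "finite Y" "c \<in> B (Y - V)" "psd_on (B Y) \<rho>"
  shows "psd_on (B V) (\<lambda>x y. \<rho> (merge x c V) (merge y c V))"
  unfolding psd_on_def
proof
  fix \<psi>
  define \<phi> :: "basis \<Rightarrow> complex" where "\<phi> a = (if restr a (Y - V) = c then \<psi> (restr a V) else 0)" for a
  have \<phi>_merge: "\<phi> (merge a' c V) = \<psi> a'" if "a' \<in> B V" for a'
    using that assms(3) by (simp add: \<phi>_def restr_merge_left restr_merge_right)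
  have "quad_form (B Y) \<rho> \<phi> =
      (\<Sum>a'\<in>B V. \<Sum>b\<in>B Y. cnj (\<phi> (merge a' c V)) * \<rho> (merge a' c V) b * \<phi> b)"
    unfolding quad_form_def by (rule sum_B_fiber) (use assms in \<open>auto simp: \<phi>_def\<close>)
  also have "\<dots> = (\<Sum>a'\<in>B V. \<Sum>b'\<in>B V.
      cnj (\<phi> (merge a' c V)) * \<rho> (merge a' c V) (merge b' c V) * \<phi> (merge b' c V))"
    by (rule sum.cong[OF refl], rule sum_B_fiber) (use assms in \<open>auto simp: \<phi>_def\<close>)
  also have "\<dots> = quad_form (B V) (\<lambda>x y. \<rho> (merge x c V) (merge y c V)) \<psi>"
    unfolding quad_form_def by (simp add: \<phi>_merge)
  finally show "Im (quad_form (B V) (\<lambda>x y. \<rho> (merge x c V) (merge y c V)) \<psi>) = 0 \<and>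
      0 \<le> Re (quad_form (B V) (\<lambda>x y. \<rho> (merge x c V) (merge y c V)) \<psi>)"
    using psd_onD[OF assms(4), of \<phi>] by simp
qed

lemma ext_ext:
  assumes "W \<subseteq> W'"
  shows "ext W' (ext W N) = ext W N"
proof (intro ext)
  fix a b
  have "restr (restr a W') W = restr a W" for a
    using assms by (auto simp: restr_def fun_eq_iff)
  moreover have "((\<forall>q. q \<notin> W' \<longrightarrow> a q = b q) \<and> (\<forall>q. q \<notin> W \<longrightarrow> restr a W' q = restr b W' q)) \<longleftrightarrow>
      (\<forall>q. q \<notin> W \<longrightarrow> a q = b q)"
    using assms by (auto simp: restr_def)
  ultimately show "ext W' (ext W N) a b = ext W N a b"
    unfolding ext_def by auto
qed

lemma ext_idop: "ext W idop = idop"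
proof (intro ext)
  fix a b
  show "ext W idop a b = idop a b"
  proof (cases "\<forall>q. q \<notin> W \<longrightarrow> a q = b q")
    case True
    then have "restr a W = restr b W \<longleftrightarrow> a = b"
      unfolding restr_def fun_eq_iff by metis
    thus ?thesis using True by (simp add: ext_def idop_def)
  next
    case False
    thus ?thesis by (auto simp: ext_def idop_def)
  qed
qed

lemma ext_idop_diff: "ext W (\<lambda>a b. idop a b - K a b) = (\<lambda>a b. idop a b - ext W K a b)"
proof (intro ext)
  fix a b
  show "ext W (\<lambda>a b. idop a b - K a b) a b = idop a b - ext W K a b"
    using fun_cong[OF fun_cong[OF ext_idop], of W a b]
    unfolding ext_def by (cases "\<forall>q. q \<notin> W \<longrightarrow> a q = b q") auto
qed

lemma effect_ext:
  assumes "W \<subseteq> W'" "finite W'" "effect W N"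
  shows "effect W' (ext W N)"
  using assms psd_on_ext[OF assms(1,2)] unfolding effect_iff_psd_on ext_idop_diff[symmetric] by blast

lemma expv_eq_trace_prod: "expv X W M \<rho> = Re (trace_prod (B X) (ext W M) \<rho>)"
  by (simp add: expv_def trace_def mult_def trace_prod_def)

lemma sum_idop_mult: "finite S \<Longrightarrow> x \<in> S \<Longrightarrow> (\<Sum>y\<in>S. idop x y * g y) = g x"
proof -
  assume "finite S" "x \<in> S"
  have "(\<Sum>y\<in>S. idop x y * g y) = (\<Sum>y\<in>S. if x = y then g x else 0)"
    by (rule sum.cong) (auto simp: idop_def)
  thus ?thesis using \<open>finite S\<close> \<open>x \<in> S\<close> by simp
qed

lemma trace_prod_idop: "finite S \<Longrightarrow> trace_prod S idop \<sigma> = (\<Sum>x\<in>S. \<sigma> x x)"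
  unfolding trace_prod_def by (simp add: sum_idop_mult)

lemma psd_on_idop: "finite S \<Longrightarrow> psd_on S idop"
  unfolding psd_on_def quad_form_eq_trace_prod_outer
  by (simp add: trace_prod_idop outer_def complex_mult_cnj Re_sum Im_sum sum_nonneg)

lemma effect_idop: "finite W \<Longrightarrow> effect W idop"
  unfolding effect_iff_psd_on
  by (intro conjI psd_on_idop finite_B) (simp_all add: psd_on_def quad_form_def)

lemma trace_prod_diff: "trace_prod S (\<lambda>x y. M x y - N x y) \<sigma> = trace_prod S M \<sigma> - trace_prod S N \<sigma>"
  unfolding trace_prod_def by (simp add: algebra_simps sum_subtractf)

lemma expv_idop: "finite X \<Longrightarrow> expv X W idop \<rho> = trr X \<rho>"
  unfolding expv_eq_trace_prod ext_idop by (simp add: trace_prod_idop finite_B trr_def trace_def)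

lemma expv_idop_diff:
  "finite X \<Longrightarrow> expv X W (\<lambda>a b. idop a b - K a b) \<rho> = trr X \<rho> - expv X W K \<rho>"
  unfolding expv_eq_trace_prod ext_idop_diff trace_prod_diff
  by (simp add: trace_prod_idop finite_B trr_def trace_def)

lemma expv_nonneg:
  assumes "finite X" "W \<subseteq> X" "effect W N" "psd_on (B X) \<sigma>"
  shows "0 \<le> expv X W N \<sigma>"
proof -
  have "psd_on (B X) (ext W N)"
    using psd_on_ext[OF assms(2,1)] assms(3) by (simp add: effect_iff_psd_on)
  thus ?thesis
    using trace_prod_psd_nonneg[OF finite_B[OF assms(1)] _ assms(4)] by (simp add: expv_eq_trace_prod)
qed


section \<open>Super-operators\<close>

lemma superop_on_add:
  "superop_on V E \<Longrightarrow> a \<in> B V \<Longrightarrow> b \<in> B V \<Longrightarrow> E (\<lambda>x y. M x y + N x y) a b = E M a b + E N a b"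
  unfolding superop_on_def by blast

lemma superop_on_scale:
  "superop_on V E \<Longrightarrow> a \<in> B V \<Longrightarrow> b \<in> B V \<Longrightarrow> E (\<lambda>x y. c * M x y) a b = c * E M a b"
  unfolding superop_on_def by blast

lemma superop_on_cong:
  "superop_on V E \<Longrightarrow> (\<And>a b. a \<in> B V \<Longrightarrow> b \<in> B V \<Longrightarrow> M a b = N a b) \<Longrightarrow>
    a \<in> B V \<Longrightarrow> b \<in> B V \<Longrightarrow> E M a b = E N a b"
  unfolding superop_on_def by blast

lemma superop_on_sum:
  assumes "superop_on V E" "a \<in> B V" "b \<in> B V" "finite I"
  shows "E (\<lambda>x y. \<Sum>i\<in>I. f i x y) a b = (\<Sum>i\<in>I. E (f i) a b)"
  using assms(4)
proof (induction I rule: finite_induct)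
  case empty
  have "E (\<lambda>x y. 0 * 0) a b = 0 * E (\<lambda>x y. 0) a b"
    by (rule superop_on_scale[OF assms(1-3)])
  then show ?case by simp
next
  case (insert i I)
  then show ?case using superop_on_add[OF assms(1-3), of "f i" "\<lambda>x y. \<Sum>i\<in>I. f i x y"] by simp
qed

lemma sapp_lin:
  assumes "superop_on V E" "finite I"
  shows "sapp V E (\<lambda>u v. \<Sum>i\<in>I. c i * R i u v) a b = (\<Sum>i\<in>I. c i * sapp V E (R i) a b)"
  unfolding sapp_def
  by (simp add: superop_on_sum[OF assms(1) restr_in_B restr_in_B assms(2)] superop_on_scale[OF assms(1)])

lemma sapp_cong:
  assumes "superop_on V E" "V \<subseteq> Y" "\<And>u v. u \<in> B Y \<Longrightarrow> v \<in> B Y \<Longrightarrow> \<rho> u v = \<rho>' u v"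
    "a \<in> B Y" "b \<in> B Y"
  shows "sapp V E \<rho> a b = sapp V E \<rho>' a b"
proof -
  have "merge a' c V \<in> B Y" if "a' \<in> B V" "c \<in> B Y" for a' c
    using that assms(2) by (auto simp: B_def merge_def)
  thus ?thesis
    unfolding sapp_def using assms(3-5) by (intro superop_on_cong[OF assms(1)]) auto
qed

lemma ptrace_sapp:
  assumes "superop_on V E" "V \<subseteq> W" "finite X"
  shows "ptrace X W (sapp V E \<rho>) = sapp V E (ptrace X W \<rho>)"
proof (intro ext)
  fix u v
  have "ptrace X W (sapp V E \<rho>) u v = (\<Sum>c\<in>B (X - W).
      E (\<lambda>a' b'. \<rho> (merge (merge a' u V) c W) (merge (merge b' v V) c W)) (restr u V) (restr v V))"
    unfolding ptrace_def sapp_def using assms(2) by (simp add: restr_merge_subset merge_merge_subset)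
  also have "\<dots> = sapp V E (ptrace X W \<rho>) u v"
    unfolding sapp_def ptrace_def
    by (rule superop_on_sum[symmetric, OF assms(1) restr_in_B restr_in_B]) (simp add: finite_B assms(3))
  finally show "ptrace X W (sapp V E \<rho>) u v = sapp V E (ptrace X W \<rho>) u v" .
qed

lemma DProg_superop_on: "E \<in> DProg V \<Longrightarrow> superop_on V E"
  unfolding DProg_def by blast

lemma DProg_psd_on_sapp:
  "E \<in> DProg V \<Longrightarrow> finite X \<Longrightarrow> V \<subseteq> X \<Longrightarrow> psd_on (B X) \<rho> \<Longrightarrow> psd_on (B X) (sapp V E \<rho>)"
  unfolding DProg_def positive_iff_psd_on by blast

lemma DProg_trace_sapp_le:
  assumes "E \<in> DProg V" "finite Y" "V \<subseteq> Y" "psd_on (B Y) \<rho>"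
  shows "trr Y (sapp V E \<rho>) \<le> trr Y \<rho>"
proof -
  define blk where "blk c = (\<lambda>x y. \<rho> (merge x c V) (merge y c V))" for c
  have "trace Y (sapp V E \<rho>) = (\<Sum>c\<in>B (Y - V). trace V (E (blk c)))"
    unfolding trace_def sapp_def blk_def sum_B_split[OF assms(3)]
    by (intro sum.cong refl) (simp add: merge_merge_right restr_merge_left)
  moreover have "trace Y \<rho> = (\<Sum>c\<in>B (Y - V). trace V (blk c))"
    unfolding trace_def blk_def sum_B_split[OF assms(3)] by simp
  moreover have "Re (trace V (E (blk c))) \<le> Re (trace V (blk c))" if "c \<in> B (Y - V)" for c
    using assms(1) psd_on_block[OF assms(3,2) that assms(4)]
    unfolding DProg_def positive_iff_psd_on blk_def by blast
  ultimately show ?thesis unfolding trr_def Re_sum by (simp add: sum_mono)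
qed

section \<open>The dual super-operator\<close>

definition ketbra :: "basis \<Rightarrow> basis \<Rightarrow> op" where
  "ketbra y x = (\<lambda>u v. if u = y \<and> v = x then 1 else 0)"

definition superop_dual :: "qvar set \<Rightarrow> superop \<Rightarrow> qvar set \<Rightarrow> op \<Rightarrow> op" where
  "superop_dual V E W K = (\<lambda>x y. trace_prod (B W) K (sapp V E (ketbra y x)))"

lemma trace_prod_sapp_dual:
  assumes "finite W" "V \<subseteq> W" "superop_on V E"
  shows "trace_prod (B W) K (sapp V E \<rho>) = trace_prod (B W) (superop_dual V E W K) \<rho>"
proof -
  let ?I = "B W \<times> B W"
  let ?E = "\<lambda>p. sapp V E (ketbra (snd p) (fst p))"
  have finI: "finite ?I" using assms(1) by (simp add: finite_B)
  have "\<rho> u v = (\<Sum>p\<in>?I. \<rho> (snd p) (fst p) * ketbra (snd p) (fst p) u v)"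
    if "u \<in> B W" "v \<in> B W" for u v
  proof -
    have "(\<Sum>p\<in>?I. \<rho> (snd p) (fst p) * ketbra (snd p) (fst p) u v) = (\<Sum>p\<in>?I. if (v, u) = p then \<rho> u v else 0)"
      by (rule sum.cong) (auto simp: ketbra_def)
    thus ?thesis using that finI by simp
  qed
  then have "sapp V E \<rho> b a = (\<Sum>p\<in>?I. \<rho> (snd p) (fst p) * ?E p b a)"
    if "a \<in> B W" "b \<in> B W" for a b
    using sapp_cong[OF assms(3,2) _ that(2,1), of \<rho>] sapp_lin[OF assms(3) finI] by simp
  then have "trace_prod (B W) K (sapp V E \<rho>) =
      (\<Sum>a\<in>B W. \<Sum>b\<in>B W. \<Sum>p\<in>?I. \<rho> (snd p) (fst p) * (K a b * ?E p b a))"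
    unfolding trace_prod_def by (simp add: sum_distrib_left mult.left_commute)
  also have "\<dots> = (\<Sum>p\<in>?I. \<rho> (snd p) (fst p) * (\<Sum>a\<in>B W. \<Sum>b\<in>B W. K a b * ?E p b a))"
    by (simp add: sum.swap[of _ ?I] sum_distrib_left)
  also have "\<dots> = trace_prod (B W) (superop_dual V E W K) \<rho>"
    unfolding trace_prod_def superop_dual_def
    by (simp add: sum.cartesian_product split_def mult.commute)
  finally show ?thesis .
qed

lemma expv_superop_dual:
  assumes "finite X" "finite W" "V \<subseteq> W" "W \<subseteq> X" "superop_on V E"
  shows "expv X W (superop_dual V E W K) \<rho> = expv X W K (sapp V E \<rho>)"
  unfolding expv_eq_trace_prod trace_prod_ext[OF assms(4,1)] ptrace_sapp[OF assms(5,3,1)]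
    trace_prod_sapp_dual[OF assms(2,3,5)] ..

text \<open>Positivity of \<open>E\<^sup>\<dagger>(K)\<close> comes from complete positivity of \<open>E\<close>, and \<open>E\<^sup>\<dagger>(K) \<le> I\<close>
  from \<open>K \<le> I\<close> together with \<open>E\<close> being trace non-increasing.\<close>
lemma effect_superop_dual:
  assumes "finite W" "V \<subseteq> W" "E \<in> DProg V" "effect W K"
  shows "effect W (superop_dual V E W K)"
  unfolding effect_iff_psd_on
proof
  have finB: "finite (B W)" using assms(1) by (rule finite_B)
  have K: "psd_on (B W) K" "psd_on (B W) (\<lambda>a b. idop a b - K a b)"
    using assms(4) by (simp_all add: effect_iff_psd_on)
  have quad_dual: "quad_form (B W) (superop_dual V E W K) \<psi> = trace_prod (B W) K (sapp V E (outer \<psi>))"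
    for \<psi> unfolding quad_form_eq_trace_prod_outer
    by (rule trace_prod_sapp_dual[symmetric, OF assms(1,2) DProg_superop_on[OF assms(3)]])
  have pos: "psd_on (B W) (sapp V E (outer \<psi>))" for \<psi>
    by (rule DProg_psd_on_sapp[OF assms(3,1,2) psd_on_outer])
  show "psd_on (B W) (superop_dual V E W K)"
    unfolding psd_on_def quad_dual using trace_prod_psd_nonneg[OF finB K(1) pos] by blast
  show "psd_on (B W) (\<lambda>a b. idop a b - superop_dual V E W K a b)"
    unfolding psd_on_def
  proof
    fix \<psi>
    let ?\<sigma> = "sapp V E (outer \<psi>)"
    have "quad_form (B W) (\<lambda>a b. idop a b - superop_dual V E W K a b) \<psi> =
        (trace W (outer \<psi>) - trace W ?\<sigma>) + trace_prod (B W) (\<lambda>a b. idop a b - K a b) ?\<sigma>"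
      unfolding quad_form_eq_trace_prod_outer trace_prod_diff
        trace_prod_sapp_dual[symmetric, OF assms(1,2) DProg_superop_on[OF assms(3)]]
      by (simp add: trace_prod_idop[OF finB] trace_def)
    moreover have "Im (trace W (outer \<psi>)) = 0" "Im (trace W ?\<sigma>) = 0"
      using psd_on_diag[OF finB psd_on_outer] psd_on_diag[OF finB pos]
      by (simp_all add: trace_def)
    moreover have "Re (trace W ?\<sigma>) \<le> Re (trace W (outer \<psi>))"
      using DProg_trace_sapp_le[OF assms(3,1,2) psd_on_outer] by (simp add: trr_def)
    ultimately show "Im (quad_form (B W) (\<lambda>a b. idop a b - superop_dual V E W K a b) \<psi>) = 0 \<and>
        0 \<le> Re (quad_form (B W) (\<lambda>a b. idop a b - superop_dual V E W K a b) \<psi>)"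
      using trace_prod_psd_nonneg[OF finB K(2) pos] by simp
  qed
qed

section \<open>Refinement\<close>

lemma expv_ext: "W \<subseteq> W' \<Longrightarrow> expv X W' (ext W N) \<sigma> = expv X W N \<sigma>"
  unfolding expv_def by (simp add: ext_ext)

lemma density_psd_on: "density X \<rho> \<Longrightarrow> psd_on (B X) \<rho>"
  by (simp add: density_def positive_iff_psd_on)

lemma le_T_e_imp_expv_le:
  assumes "finite V" "E \<in> DProg V" "le_T_e V E F" "finite W" "effect W N"
    and X: "finite X" "V \<union> W \<subseteq> X" "density X \<rho>"
  shows "expv X W N (sapp V E \<rho>) \<le> expv X W N (sapp V F \<rho>)"
proof -
  define W' where "W' = V \<union> W"
  define N' where "N' = ext W N"
  define M where "M = superop_dual V E W' N'"
  have W': "finite W'" "V \<subseteq> W'" "W \<subseteq> W'" "W' \<subseteq> X"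
    using assms by (auto simp: W'_def)
  have dual: "expv Y W' M \<sigma> = expv Y W' N' (sapp V E \<sigma>)" if "finite Y" "W' \<subseteq> Y" for Y \<sigma>
    unfolding M_def using that W' DProg_superop_on[OF assms(2)] by (intro expv_superop_dual) auto
  have "effect W' N'"
    unfolding N'_def by (rule effect_ext[OF W'(3,1) assms(5)])
  moreover have "effect W' M"
    unfolding M_def by (rule effect_superop_dual[OF W'(1,2) assms(2) \<open>effect W' N'\<close>])
  moreover have "sat_tot_e V E W' M N'"
    unfolding sat_tot_e_def using dual by auto
  ultimately have "sat_tot_e V F W' M N'"
    using assms(3) W'(1) unfolding le_T_e_def by blast
  then have "expv X W' M \<rho> \<le> expv X W' N' (sapp V F \<rho>)"
    using X W' unfolding sat_tot_e_def by blast
  then show ?thesis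
    using dual[OF X(1) W'(4)] expv_ext[OF W'(3)] by (simp add: N'_def)
qed

lemma le_P_e_imp_expv_le:
  assumes "finite V" "E \<in> DProg V" "le_P_e V E F" "finite W" "effect W N"
    and X: "finite X" "V \<union> W \<subseteq> X" "density X \<rho>"
  shows "expv X W N (sapp V E \<rho>) + trr X \<rho> - trr X (sapp V E \<rho>) \<le>
    expv X W N (sapp V F \<rho>) + trr X \<rho> - trr X (sapp V F \<rho>)"
proof -
  define W' where "W' = V \<union> W"
  define N' where "N' = ext W N"
  define M where "M = (\<lambda>a b. idop a b - superop_dual V E W' (\<lambda>a b. idop a b - N' a b) a b)"
  have W': "finite W'" "V \<subseteq> W'" "W \<subseteq> W'" "W' \<subseteq> X"
    using assms by (auto simp: W'_def)
  have wlp: "expv Y W' M \<sigma> = expv Y W' N' (sapp V E \<sigma>) + trr Y \<sigma> - trr Y (sapp V E \<sigma>)"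
    if "finite Y" "W' \<subseteq> Y" for Y \<sigma>
    unfolding M_def using that W' DProg_superop_on[OF assms(2)]
    by (simp add: expv_idop_diff expv_superop_dual)
  have "effect W' N'"
    unfolding N'_def by (rule effect_ext[OF W'(3,1) assms(5)])
  moreover have "effect W' M"
    using effect_superop_dual[OF W'(1,2) assms(2)] \<open>effect W' N'\<close>
    unfolding M_def by (simp add: effect_def)
  moreover have "sat_par_e V E W' M N'"
    unfolding sat_par_e_def using wlp by auto
  ultimately have "sat_par_e V F W' M N'"
    using assms(3) W'(1) unfolding le_P_e_def by blast
  then have "expv X W' M \<rho> \<le> expv X W' N' (sapp V F \<rho>) + trr X \<rho> - trr X (sapp V F \<rho>)"
    using X W' unfolding sat_par_e_def by blast
  then show ?thesis
    using wlp[OF X(1) W'(4)] expv_ext[OF W'(3)] by (simp add: N'_def)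
qed

lemma le_T_e_imp_trr_le:
  assumes "finite V" "E \<in> DProg V" "le_T_e V E F" "finite X" "V \<subseteq> X" "density X \<rho>"
  shows "trr X (sapp V E \<rho>) \<le> trr X (sapp V F \<rho>)"
  using le_T_e_imp_expv_le[OF assms(1-3) finite.emptyI _ assms(4) _ assms(6), of idop] assms(5)
  by (simp add: expv_idop[OF assms(4)] effect_idop)

lemma bdd_below_expv:
  "finite X \<Longrightarrow> W \<subseteq> X \<Longrightarrow> \<Psi> \<subseteq> Collect (effect W) \<Longrightarrow> psd_on (B X) \<sigma> \<Longrightarrow>
    bdd_below ((\<lambda>N. expv X W N \<sigma>) ` \<Psi>)"
  by (rule bdd_belowI2[of _ 0]) (use expv_nonneg in auto)

lemma Exp_dem_shift_le:
  assumes "bdd_below ((\<lambda>N. expv X W N \<sigma>) ` \<Psi>)"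
    and "\<And>N. N \<in> \<Psi> \<Longrightarrow> expv X W N \<sigma> + c \<le> expv X W N \<sigma>' + c'"
    and "\<Psi> = {} \<Longrightarrow> trr X \<sigma> + c \<le> trr X \<sigma>' + c'"
  shows "Exp_dem X W \<sigma> \<Psi> + c \<le> Exp_dem X W \<sigma>' \<Psi> + c'"
proof (cases "\<Psi> = {}")
  case False
  have "(INF N\<in>\<Psi>. expv X W N \<sigma>) + c - c' \<le> expv X W N \<sigma>'" if "N \<in> \<Psi>" for N
    using cINF_lower[OF assms(1) that] assms(2)[OF that] by linarith
  then have "(INF N\<in>\<Psi>. expv X W N \<sigma>) + c - c' \<le> (INF N\<in>\<Psi>. expv X W N \<sigma>')"
    using False by (intro cINF_greatest)
  then show ?thesis using False by (simp add: Exp_dem_def)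
qed (use assms(3) in \<open>simp add: Exp_dem_def\<close>)

lemma sat_tot_s_singleton: "sat_tot_s V {G} W {M} {N} \<longleftrightarrow> sat_tot_e V G W M N"
  by (simp add: sat_tot_s_def sat_tot_e_def Exp_dem_def)

lemma sat_par_s_singleton: "sat_par_s V {G} W {M} {N} \<longleftrightarrow> sat_par_e V G W M N"
  by (simp add: sat_par_s_def sat_par_e_def Exp_dem_def)

lemma le_T_s_singleton_iff:
  assumes "finite V" "E \<in> DProg V"
  shows "le_T_s V {E} {F} \<longleftrightarrow> le_T_e V E F"
proof
  assume "le_T_s V {E} {F}"
  then show "le_T_e V E F"
    unfolding le_T_s_def le_T_e_def sat_tot_s_singleton[symmetric] by blast
next
  assume le: "le_T_e V E F"
  show "le_T_s V {E} {F}"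
    unfolding le_T_s_def sat_tot_s_def
  proof (intro allI impI)
    fix W \<Theta> \<Psi> X \<rho>
    assume W: "finite W \<and> \<Theta> \<subseteq> Collect (effect W) \<and> \<Psi> \<subseteq> Collect (effect W)"
      and sat: "\<forall>X \<rho>. finite X \<and> V \<union> W \<subseteq> X \<and> density X \<rho> \<longrightarrow>
        Exp_dem X W \<rho> \<Theta> \<le> (INF G\<in>{E}. Exp_dem X W (sapp V G \<rho>) \<Psi>)"
      and X: "finite X \<and> V \<union> W \<subseteq> X \<and> density X \<rho>"
    have "Exp_dem X W \<rho> \<Theta> \<le> Exp_dem X W (sapp V E \<rho>) \<Psi>"
      using sat X by simp
    also have "\<dots> + 0 \<le> Exp_dem X W (sapp V F \<rho>) \<Psi> + 0"
      using X W le_T_e_imp_expv_le[OF assms le] le_T_e_imp_trr_le[OF assms le]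
        bdd_below_expv DProg_psd_on_sapp[OF assms(2)] density_psd_on
      by (intro Exp_dem_shift_le) auto
    finally show "Exp_dem X W \<rho> \<Theta> \<le> (INF G\<in>{F}. Exp_dem X W (sapp V G \<rho>) \<Psi>)"
      by simp
  qed
qed

lemma le_P_s_singleton_iff:
  assumes "finite V" "E \<in> DProg V"
  shows "le_P_s V {E} {F} \<longleftrightarrow> le_P_e V E F"
proof
  assume "le_P_s V {E} {F}"
  then show "le_P_e V E F"
    unfolding le_P_s_def le_P_e_def sat_par_s_singleton[symmetric] by blast
next
  assume le: "le_P_e V E F"
  show "le_P_s V {E} {F}"
    unfolding le_P_s_def sat_par_s_def
  proof (intro allI impI)
    fix W \<Theta> \<Psi> X \<rho>
    assume W: "finite W \<and> \<Theta> \<subseteq> Collect (effect W) \<and> \<Psi> \<subseteq> Collect (effect W)"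
      and sat: "\<forall>X \<rho>. finite X \<and> V \<union> W \<subseteq> X \<and> density X \<rho> \<longrightarrow>
        Exp_dem X W \<rho> \<Theta> \<le> (INF G\<in>{E}. Exp_dem X W (sapp V G \<rho>) \<Psi> + trr X \<rho> - trr X (sapp V G \<rho>))"
      and X: "finite X \<and> V \<union> W \<subseteq> X \<and> density X \<rho>"
    have "Exp_dem X W \<rho> \<Theta> \<le> Exp_dem X W (sapp V E \<rho>) \<Psi> + (trr X \<rho> - trr X (sapp V E \<rho>))"
      using sat X by (simp add: add_diff_eq)
    also have "\<dots> \<le> Exp_dem X W (sapp V F \<rho>) \<Psi> + (trr X \<rho> - trr X (sapp V F \<rho>))"
      using X W le_P_e_imp_expv_le[OF assms le]
        bdd_below_expv DProg_psd_on_sapp[OF assms(2)] density_psd_on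
      by (intro Exp_dem_shift_le) (auto simp: algebra_simps)
    finally show "Exp_dem X W \<rho> \<Theta> \<le> (INF G\<in>{F}. Exp_dem X W (sapp V G \<rho>) \<Psi> + trr X \<rho> - trr X (sapp V G \<rho>))"
      by (simp add: add_diff_eq)
  qed
qed

theorem corollary5p2:
  fixes V :: "qvar set" and E F :: superop
  assumes "finite V" and "E \<in> DProg V" and "F \<in> DProg V"
  shows "(le_T_s V {E} {F} \<longleftrightarrow> le_T_e V E F) \<and> (le_P_s V {E} {F} \<longleftrightarrow> le_P_e V E F)"
  using le_T_s_singleton_iff[OF assms(1,2)] le_P_s_singleton_iff[OF assms(1,2)] by blast

end
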